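(* The following statements are equivalent: (1) For all $k>1$, every infinite word on the alphabet $\{1,2,\dots,k\}$ has two adjacent factors with equal length and equal sum. (1a) For all $k>1$, there exists $R=R(k)$ such that every word on $\{1,2,\dots,k\}$ of length $R$ has two adjacent factors with equal length and equal sum. (2) For all $n>1$, if $x_1<x_2<x_3<\cdots$ is an infinite sequence of positive integers with $x_{i+1}-x_i\le n$ for all $i\ge1$, then there exist $1\le i<j<k$ with $x_i+x_k=2x_j$ and $i+k=2j$. (2a) For all $n>1$, there exists $S=S(n)$ such that if $x_1<x_2<\cdots<x_S$ are positive integers with $x_{i+1}-x_i\le n$ for $1\le i\le S-1$, then there exist $1\le i<j<k\le S$ with $x_i+x_k=2x_j$ and $i+k=2j$. (3) For all $t>1$, if $\mathbb{N}=A_1\cup A_2\cup\cdots\cup A_t$ (the sets $A_q$ not necessarily disjoint), then there exists $q$, $1\le q\le t$, such that, writing $A_q=\{x_1<x_2<\cdots\}$, there are $1\le i<j<k$ with $x_i+x_k=2x_j$ and $i+k=2j$. (3a) For all $t>1$, there exists $T=T(t)$ such that for all $a\ge1$, if $\{a,a+1,\dots,a+T-1\}=A_1\cup\cdots\cup A_t$ (the sets not necessarily disjoint), then there exists $q$, $1\le q\le t$, such that, writing $A_q=\{x_1<x_2<\cdots<x_p\}$, there are $1\le i<j<k\le p$ with $x_i+x_k=2x_j$ and $i+k=2j$.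
   Context: A word on a finite alphabet $S\subset\mathbb{Z}$ is a (finite or infinite) sequence $x_1x_2\cdots$ of elements of $S$. A factor of length $\ell$ is a block $x_mx_{m+1}\cdots x_{m+\ell-1}$ of consecutive letters, and its sum is $x_m+\cdots+x_{m+\ell-1}$. Two factors are adjacent if the second begins immediately after the first ends. *)

theory Defs
  imports Main
begin

definition has_adj_eq_sum :: "(nat \<Rightarrow> nat) \<Rightarrow> bool" where
  "has_adj_eq_sum w \<longleftrightarrow> (\<exists>m l. l \<ge> 1 \<and>
      (\<Sum>i\<in>{m..<m+l}. w i) = (\<Sum>i\<in>{m+l..<m+2*l}. w i))"

definition list_has_adj_eq_sum :: "nat list \<Rightarrow> bool" where
  "list_has_adj_eq_sum xs \<longleftrightarrow> (\<exists>m l. l \<ge> 1 \<and> m + 2*l \<le> length xs \<and>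
      (\<Sum>i\<in>{m..<m+l}. xs ! i) = (\<Sum>i\<in>{m+l..<m+2*l}. xs ! i))"

text \<open>Position of an element x in the increasing enumeration of a set A of naturals
  (0-based: the number of elements of A below x).\<close>
definition rank :: "nat set \<Rightarrow> nat \<Rightarrow> nat" where
  "rank A x = card {y \<in> A. y < x}"

definition has_index_ap :: "nat set \<Rightarrow> bool" where
  "has_index_ap A \<longleftrightarrow> (\<exists>a b c. a \<in> A \<and> b \<in> A \<and> c \<in> A \<and> a < b \<and> b < c \<and>
      a + c = 2*b \<and> rank A a + rank A c = 2 * rank A b)"

definition stmt1 :: bool where
  "stmt1 \<longleftrightarrow> (\<forall>k::nat. k > 1 \<longrightarrow>
     (\<forall>w::nat \<Rightarrow> nat. (\<forall>i. w i \<in> {1..k}) \<longrightarrow> has_adj_eq_sum w))"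

definition stmt1a :: bool where
  "stmt1a \<longleftrightarrow> (\<forall>k::nat. k > 1 \<longrightarrow> (\<exists>R::nat.
     \<forall>xs::nat list. length xs = R \<and> set xs \<subseteq> {1..k} \<longrightarrow> list_has_adj_eq_sum xs))"

definition stmt2 :: bool where
  "stmt2 \<longleftrightarrow> (\<forall>n::nat. n > 1 \<longrightarrow> (\<forall>x::nat \<Rightarrow> nat.
     (\<forall>i\<ge>1. 0 < x i \<and> x i < x (i+1) \<and> x (i+1) - x i \<le> n) \<longrightarrow>
     (\<exists>i j k. 1 \<le> i \<and> i < j \<and> j < k \<and> x i + x k = 2 * x j \<and> i + k = 2 * j)))"

definition stmt2a :: bool where
  "stmt2a \<longleftrightarrow> (\<forall>n::nat. n > 1 \<longrightarrow> (\<exists>S::nat. \<forall>x::nat \<Rightarrow> nat.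
     (\<forall>i. 1 \<le> i \<and> i \<le> S \<longrightarrow> 0 < x i) \<and>
     (\<forall>i. 1 \<le> i \<and> i \<le> S - 1 \<longrightarrow> x i < x (i+1) \<and> x (i+1) - x i \<le> n) \<longrightarrow>
     (\<exists>i j k. 1 \<le> i \<and> i < j \<and> j < k \<and> k \<le> S \<and> x i + x k = 2 * x j \<and> i + k = 2 * j)))"

definition stmt3 :: bool where
  "stmt3 \<longleftrightarrow> (\<forall>t::nat. t > 1 \<longrightarrow> (\<forall>A::nat \<Rightarrow> nat set.
     (\<Union>q\<in>{1..t}. A q) = {1..} \<longrightarrow> (\<exists>q\<in>{1..t}. has_index_ap (A q))))"

definition stmt3a :: bool where
  "stmt3a \<longleftrightarrow> (\<forall>t::nat. t > 1 \<longrightarrow> (\<exists>T::nat. \<forall>a::nat. a \<ge> 1 \<longrightarrow>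
     (\<forall>A::nat \<Rightarrow> nat set. (\<Union>q\<in>{1..t}. A q) = {a..<a+T} \<longrightarrow>
        (\<exists>q\<in>{1..t}. has_index_ap (A q)))))"

end

theory Submission
  imports Defs
begin

text \<open>
  The partial sums of a word form an increasing sequence whose gaps are its letters, and the two
  adjacent factors of length l starting at position m have equal sums exactly when the partial
  sums at m, m + l, m + 2l form an arithmetic progression; this gives (2) \<Longrightarrow> (1) and
  (1a) \<Longrightarrow> (2a). Koenig's lemma, applied to the finitely branching tree of words without such
  factors, gives (1) \<Longrightarrow> (1a). A sequence with gaps at most n covers the positive integers by
  n of its translates, so (3) \<Longrightarrow> (2). Finally, if an interval is covered by t sets, either one
  of them misses a window of length d, which is then covered by the other t - 1 sets, or it meets
  every such window, and then its consecutive elements in the interval form a sequence with gaps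
  at most d to which (2a) applies; induction on t gives (2a) \<Longrightarrow> (3a) and (2a) \<Longrightarrow> (3), and
  (3a) \<Longrightarrow> (3) by truncating the cover.
\<close>

lemma sum_lessThan_add_split:
  fixes w :: "nat \<Rightarrow> 'a::comm_monoid_add"
  shows "sum w {..<m + l} = sum w {..<m} + sum w {m..<m + l}"
  unfolding lessThan_atLeast0 by (rule sum.atLeastLessThan_concat[symmetric]) auto

lemma adjacent_sums_eq_iff_prefix_sums:
  fixes w :: "nat \<Rightarrow> nat"
  shows "sum w {m..<m+l} = sum w {m+l..<m+2*l} \<longleftrightarrow>
         sum w {..<m} + sum w {..<m+2*l} = 2 * sum w {..<m+l}"
  using sum_lessThan_add_split[of w m l] sum_lessThan_add_split[of w "m+l" l]
  by (auto simp: mult_2 add.assoc)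

lemma sum_lessThan_telescope_nat:
  fixes x :: "nat \<Rightarrow> nat"
  assumes "\<And>i. i < n \<Longrightarrow> x i \<le> x (Suc i)"
  shows "x n = x 0 + (\<Sum>i<n. x (Suc i) - x i)"
  using assms
proof (induction n)
  case (Suc n)
  have IH: "x n = x 0 + (\<Sum>i<n. x (Suc i) - x i)" using Suc by simp
  have "x n \<le> x (Suc n)" using Suc.prems[of n] by simp
  with IH show ?case by simp
qed simp

lemma differences_prefix_sums:
  fixes x :: "nat \<Rightarrow> nat"
  assumes "\<And>i. 1 \<le> i \<Longrightarrow> i \<le> n \<Longrightarrow> x i \<le> x (Suc i)" and "i \<le> n"
  shows "x (Suc i) = x 1 + (\<Sum>p<i. x (Suc (Suc p)) - x (Suc p))"
  using sum_lessThan_telescope_nat[of i "\<lambda>p. x (Suc p)"] assms by simp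

lemma list_has_adj_eq_sum_map_upt:
  "list_has_adj_eq_sum (map w [0..<n]) \<longleftrightarrow>
     (\<exists>m l. 1 \<le> l \<and> m + 2*l \<le> n \<and> sum w {m..<m+l} = sum w {m+l..<m+2*l})"
  unfolding list_has_adj_eq_sum_def
  by (intro iff_exI conj_cong refl arg_cong2[where f="(=)"] sum.cong) auto

lemma has_adj_eq_sum_iff_prefix:
  "has_adj_eq_sum w \<longleftrightarrow> (\<exists>n. list_has_adj_eq_sum (map w [0..<n]))"
  unfolding has_adj_eq_sum_def list_has_adj_eq_sum_map_upt by auto

lemma list_has_adj_eq_sum_append:
  "list_has_adj_eq_sum xs \<Longrightarrow> list_has_adj_eq_sum (xs @ ys)"
  unfolding list_has_adj_eq_sum_def
proof (elim exE conjE)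
  fix m l assume "1 \<le> l" "m + 2*l \<le> length xs"
    "(\<Sum>i\<in>{m..<m+l}. xs ! i) = (\<Sum>i\<in>{m+l..<m+2*l}. xs ! i)"
  then show "\<exists>m l. 1 \<le> l \<and> m + 2*l \<le> length (xs @ ys) \<and>
      (\<Sum>i\<in>{m..<m+l}. (xs @ ys) ! i) = (\<Sum>i\<in>{m+l..<m+2*l}. (xs @ ys) ! i)"
    by (intro exI[of _ m] exI[of _ l]) (auto simp: nth_append intro!: sum.cong)
qed

definition has_index_ap_upto :: "nat \<Rightarrow> (nat \<Rightarrow> nat) \<Rightarrow> bool" where
  "has_index_ap_upto N x \<longleftrightarrow>
     (\<exists>i j k. 1 \<le> i \<and> i < j \<and> j < k \<and> k \<le> N \<and> x i + x k = 2 * x j \<and> i + k = 2 * j)"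

lemma has_index_ap_upto_iff_adj_eq_sum:
  fixes x w :: "nat \<Rightarrow> nat"
  assumes x: "\<And>i. i \<le> n \<Longrightarrow> x (Suc i) = c + sum w {..<i}"
  shows "has_index_ap_upto (Suc n) x \<longleftrightarrow> list_has_adj_eq_sum (map w [0..<n])"
proof
  assume "has_index_ap_upto (Suc n) x"
  then obtain i j k where ijk: "1 \<le> i" "i < j" "j < k" "k \<le> Suc n"
    "x i + x k = 2 * x j" "i + k = 2 * j"
    unfolding has_index_ap_upto_def by blast
  define m l where "m = i - 1" and "l = j - i"
  have idx: "i = Suc m" "j = Suc (m + l)" "k = Suc (m + 2*l)" "m + 2*l \<le> n"
    using ijk unfolding m_def l_def by auto
  have "sum w {m..<m+l} = sum w {m+l..<m+2*l}"
    unfolding adjacent_sums_eq_iff_prefix_sums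
    using ijk(5) x[of m] x[of "m+l"] x[of "m+2*l"] idx by simp
  then show "list_has_adj_eq_sum (map w [0..<n])"
    unfolding list_has_adj_eq_sum_map_upt using idx ijk by (intro exI[of _ m] exI[of _ l]) auto
next
  assume "list_has_adj_eq_sum (map w [0..<n])"
  then obtain m l where ml: "1 \<le> l" "m + 2*l \<le> n" "sum w {m..<m+l} = sum w {m+l..<m+2*l}"
    unfolding list_has_adj_eq_sum_map_upt by blast
  then have "x (Suc m) + x (Suc (m+2*l)) = 2 * x (Suc (m+l))"
    unfolding adjacent_sums_eq_iff_prefix_sums using x[of m] x[of "m+l"] x[of "m+2*l"] by simp
  then show "has_index_ap_upto (Suc n) x"
    unfolding has_index_ap_upto_def using ml
    by (intro exI[of _ "Suc m"] exI[of _ "Suc (m+l)"] exI[of _ "Suc (m+2*l)"]) auto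
qed

lemma stmt2_imp_stmt1: "stmt2 \<Longrightarrow> stmt1"
  unfolding stmt1_def
proof (intro allI impI)
  fix k :: nat and w :: "nat \<Rightarrow> nat"
  assume "stmt2" "k > 1" and w: "\<forall>i. w i \<in> {1..k}"
  define x where "x i = 1 + sum w {..<i - 1}" for i
  have prefix: "x (Suc i) = 1 + sum w {..<i}" for i
    unfolding x_def by simp
  have step: "x (Suc i) = x i + w (i - 1)" if "0 < i" for i
    using that unfolding x_def by (cases i) auto
  have "0 < x i" for i
    unfolding x_def by simp
  moreover have "1 \<le> w i" "w i \<le> k" for i
    using w by auto
  ultimately have "\<forall>i\<ge>1. 0 < x i \<and> x i < x (i+1) \<and> x (i+1) - x i \<le> k"
    by (simp add: step Suc_le_eq)
  then obtain i j l where "1 \<le> i" "i < j" "j < l" "x i + x l = 2 * x j" "i + l = 2 * j"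
    using \<open>stmt2\<close> \<open>k > 1\<close> unfolding stmt2_def by blast
  then have "has_index_ap_upto (Suc (l - 1)) x"
    unfolding has_index_ap_upto_def by (intro exI[of _ i] exI[of _ j] exI[of _ l]) auto
  then have "list_has_adj_eq_sum (map w [0..<l - 1])"
    using has_index_ap_upto_iff_adj_eq_sum prefix by blast
  then show "has_adj_eq_sum w"
    unfolding has_adj_eq_sum_iff_prefix by blast
qed

lemma stmt2a_iff:
  "stmt2a \<longleftrightarrow> (\<forall>n>1. \<exists>S. \<forall>x. (\<forall>i. 1 \<le> i \<and> i \<le> S \<longrightarrow> 0 < x i) \<and>
      (\<forall>i. 1 \<le> i \<and> i < S \<longrightarrow> x i < x (Suc i) \<and> x (Suc i) \<le> x i + n) \<longrightarrow> has_index_ap_upto S x)"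
proof -
  have "(1 \<le> i \<and> i \<le> S - 1 \<longrightarrow> x i < x (i+1) \<and> x (i+1) - x i \<le> n) \<longleftrightarrow>
      (1 \<le> i \<and> i < S \<longrightarrow> x i < x (Suc i) \<and> x (Suc i) \<le> x i + n)" for i S n and x :: "nat \<Rightarrow> nat"
    by auto
  then show ?thesis
    unfolding stmt2a_def has_index_ap_upto_def by (simp only:)
qed

lemma stmt2aI:
  assumes "\<And>n. n > 1 \<Longrightarrow> \<exists>S. \<forall>x.
      (\<forall>i. 1 \<le> i \<and> i < S \<longrightarrow> x i < x (Suc i) \<and> x (Suc i) \<le> x i + n) \<longrightarrow> has_index_ap_upto S x"
  shows "stmt2a"
  unfolding stmt2a_iff
proof (intro allI impI)
  fix n :: nat
  assume "n > 1"
  then obtain S where "\<forall>x. (\<forall>i. 1 \<le> i \<and> i < S \<longrightarrow> x i < x (Suc i) \<and> x (Suc i) \<le> x i + n) \<longrightarrow>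
      has_index_ap_upto S x"
    using assms by blast
  then show "\<exists>S. \<forall>x. (\<forall>i. 1 \<le> i \<and> i \<le> S \<longrightarrow> 0 < x i) \<and>
      (\<forall>i. 1 \<le> i \<and> i < S \<longrightarrow> x i < x (Suc i) \<and> x (Suc i) \<le> x i + n) \<longrightarrow> has_index_ap_upto S x"
    by blast
qed

lemma stmt2aD:
  assumes "stmt2a" "n > 1"
  obtains S where "\<And>x. (\<And>i. 1 \<le> i \<Longrightarrow> i \<le> S \<Longrightarrow> 0 < x i) \<Longrightarrow>
      (\<And>i. 1 \<le> i \<Longrightarrow> i < S \<Longrightarrow> x i < x (Suc i) \<and> x (Suc i) \<le> x i + n) \<Longrightarrow>
      has_index_ap_upto S x"
proof -
  obtain S where S: "\<forall>x. (\<forall>i. 1 \<le> i \<and> i \<le> S \<longrightarrow> 0 < x i) \<and>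
      (\<forall>i. 1 \<le> i \<and> i < S \<longrightarrow> x i < x (Suc i) \<and> x (Suc i) \<le> x i + n) \<longrightarrow> has_index_ap_upto S x"
    using assms(1)[unfolded stmt2a_iff, rule_format, OF assms(2)] by (elim exE)
  show thesis
    by (rule that) (use S in blast)
qed

lemma stmt1a_imp_stmt2a: "stmt1a \<Longrightarrow> stmt2a"
proof (rule stmt2aI)
  fix n :: nat
  assume "stmt1a" "n > 1"
  then obtain R where R: "\<And>xs. length xs = R \<Longrightarrow> set xs \<subseteq> {1..n} \<Longrightarrow> list_has_adj_eq_sum xs"
    unfolding stmt1a_def by blast
  have "has_index_ap_upto (Suc R) x"
    if x: "\<forall>i. 1 \<le> i \<and> i < Suc R \<longrightarrow> x i < x (Suc i) \<and> x (Suc i) \<le> x i + n" for x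
  proof -
    define w where "w p = x (Suc (Suc p)) - x (Suc p)" for p
    have "set (map w [0..<R]) \<subseteq> {1..n}"
      using x unfolding w_def by force
    then have "list_has_adj_eq_sum (map w [0..<R])"
      using R by simp
    moreover have "x (Suc i) = x 1 + sum w {..<i}" if "i \<le> R" for i
      unfolding w_def using x that by (intro differences_prefix_sums) auto
    ultimately show ?thesis
      using has_index_ap_upto_iff_adj_eq_sum by blast
  qed
  then show "\<exists>S. \<forall>x. (\<forall>i. 1 \<le> i \<and> i < S \<longrightarrow> x i < x (Suc i) \<and> x (Suc i) \<le> x i + n) \<longrightarrow>
      has_index_ap_upto S x"
    by blast
qed

definition extensible :: "'a set \<Rightarrow> ('a list \<Rightarrow> bool) \<Rightarrow> 'a list \<Rightarrow> bool" where
  "extensible \<Sigma> P xs \<longleftrightarrow> (\<forall>n. \<exists>ys. length ys = n \<and> set ys \<subseteq> \<Sigma> \<and> P (xs @ ys))"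

lemma extensible_snoc:
  assumes "finite \<Sigma>" and prefix_closed: "\<And>xs ys. P (xs @ ys) \<Longrightarrow> P xs"
    and "extensible \<Sigma> P xs"
  shows "\<exists>c\<in>\<Sigma>. extensible \<Sigma> P (xs @ [c])"
proof (rule ccontr)
  assume "\<not> ?thesis"
  then have "\<forall>c\<in>\<Sigma>. \<exists>n. \<forall>ys. set ys \<subseteq> \<Sigma> \<longrightarrow> length ys = n \<longrightarrow> \<not> P (xs @ c # ys)"
    unfolding extensible_def by auto
  then have "\<exists>f. \<forall>c\<in>\<Sigma>. \<forall>ys. set ys \<subseteq> \<Sigma> \<longrightarrow> length ys = f c \<longrightarrow> \<not> P (xs @ c # ys)"
    by (rule bchoice)
  then obtain f where f: "\<And>c ys. c \<in> \<Sigma> \<Longrightarrow> set ys \<subseteq> \<Sigma> \<Longrightarrow> length ys = f c \<Longrightarrow> \<not> P (xs @ c # ys)"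
    by blast
  obtain ys where ys: "length ys = Suc (Max (f ` \<Sigma>))" "set ys \<subseteq> \<Sigma>" "P (xs @ ys)"
    using \<open>extensible \<Sigma> P xs\<close> unfolding extensible_def by blast
  then obtain c zs where c: "ys = c # zs" "c \<in> \<Sigma>"
    by (cases ys) auto
  have "length (take (f c) zs) = f c"
    using ys(1) c \<open>finite \<Sigma>\<close> by simp
  moreover have "set (take (f c) zs) \<subseteq> \<Sigma>"
    using ys(2) c(1) set_take_subset[of "f c" zs] by auto
  moreover have "P (xs @ c # take (f c) zs)"
    using prefix_closed[of "xs @ c # take (f c) zs" "drop (f c) zs"] ys(3) c(1) by simp
  ultimately show False
    using f c(2) by blast
qed

lemma infinite_word_if_arbitrarily_long:
  assumes "finite \<Sigma>" and prefix_closed: "\<And>xs ys. P (xs @ ys) \<Longrightarrow> P xs"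
    and long: "\<And>n. \<exists>xs. length xs = n \<and> set xs \<subseteq> \<Sigma> \<and> P xs"
  shows "\<exists>w. (\<forall>i. w i \<in> \<Sigma>) \<and> (\<forall>n. P (map w [0..<n]))"
proof -
  have "\<exists>c. extensible \<Sigma> P xs \<longrightarrow> c \<in> \<Sigma> \<and> extensible \<Sigma> P (xs @ [c])" for xs
    using extensible_snoc[of \<Sigma> P xs] assms(1) prefix_closed by blast
  then have "\<exists>pick. \<forall>xs. extensible \<Sigma> P xs \<longrightarrow> pick xs \<in> \<Sigma> \<and> extensible \<Sigma> P (xs @ [pick xs])"
    by (intro choice allI)
  then obtain pick where pick:
    "\<And>xs. extensible \<Sigma> P xs \<Longrightarrow> pick xs \<in> \<Sigma> \<and> extensible \<Sigma> P (xs @ [pick xs])"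
    by blast
  define prefix where "prefix n = ((\<lambda>xs. xs @ [pick xs]) ^^ n) []" for n
  define w where "w i = pick (prefix i)" for i
  have prefix_Suc: "prefix (Suc n) = prefix n @ [w n]" for n
    unfolding prefix_def w_def by simp
  have prefix: "extensible \<Sigma> P (prefix n) \<and> prefix n = map w [0..<n]" for n
  proof (induction n)
    case 0
    show ?case
      using long unfolding prefix_def extensible_def by simp
  next
    case (Suc n)
    then have "extensible \<Sigma> P (prefix n @ [w n])"
      using pick[of "prefix n"] unfolding w_def by blast
    with Suc show ?case
      unfolding prefix_Suc by simp
  qed
  have "w i \<in> \<Sigma>" for i
    using pick prefix unfolding w_def by blast
  moreover have "P (map w [0..<n])" for n
  proof -
    obtain ys where "length ys = 0" "P (prefix n @ ys)"
      using prefix[of n] unfolding extensible_def by blast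
    then show ?thesis
      using prefix[of n] by simp
  qed
  ultimately show ?thesis
    by blast
qed

lemma stmt1_imp_stmt1a: "stmt1 \<Longrightarrow> stmt1a"
proof (rule ccontr)
  assume "stmt1" "\<not> stmt1a"
  then obtain k :: nat where "k > 1"
    and long: "\<And>R. \<exists>xs. length xs = R \<and> set xs \<subseteq> {1..k} \<and> \<not> list_has_adj_eq_sum xs"
    unfolding stmt1a_def by blast
  obtain w where "\<forall>i. w i \<in> {1..k}" "\<forall>n. \<not> list_has_adj_eq_sum (map w [0..<n])"
    using infinite_word_if_arbitrarily_long[of "{1..k}" "\<lambda>xs. \<not> list_has_adj_eq_sum xs"]
      list_has_adj_eq_sum_append long by blast
  then show False
    using \<open>stmt1\<close> \<open>k > 1\<close> unfolding stmt1_def has_adj_eq_sum_iff_prefix by blast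
qed

lemma rank_range_strict_mono:
  fixes f :: "nat \<Rightarrow> nat"
  assumes "strict_mono f"
  shows "rank (range f) (f i) = i"
proof -
  have "{y \<in> range f. y < f i} = f ` {..<i}"
    using strict_mono_less[OF assms] by auto
  then show ?thesis
    unfolding rank_def using strict_mono_imp_inj_on[OF assms] by (simp add: card_image inj_on_subset)
qed

lemma has_index_ap_range_iff:
  fixes f :: "nat \<Rightarrow> nat"
  assumes "strict_mono f"
  shows "has_index_ap (range f) \<longleftrightarrow>
           (\<exists>i j k. i < j \<and> j < k \<and> f i + f k = 2 * f j \<and> i + k = 2 * j)"
proof -
  have "has_index_ap (range f) \<longleftrightarrow> (\<exists>i j k. f i < f j \<and> f j < f k \<and> f i + f k = 2 * f j \<and>
      rank (range f) (f i) + rank (range f) (f k) = 2 * rank (range f) (f j))"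
    unfolding has_index_ap_def by blast
  then show ?thesis
    unfolding rank_range_strict_mono[OF assms] strict_mono_less[OF assms] .
qed

lemma exists_crossing:
  fixes y :: "nat \<Rightarrow> nat"
  assumes "y 0 < m" "m \<le> y n"
  shows "\<exists>i. y i < m \<and> m \<le> y (Suc i)"
  using assms(2)
proof (induction n)
  case 0
  then show ?case using assms(1) by simp
next
  case (Suc n)
  then show ?case by (cases "m \<le> y n") (auto simp: not_le)
qed

lemma translates_cover:
  fixes y :: "nat \<Rightarrow> nat"
  assumes "y 0 = 0" and "strict_mono y" and gaps: "\<And>i. y (Suc i) \<le> y i + n"
  shows "(\<Union>q\<in>{1..n}. range (\<lambda>i. y i + q)) = {1..}"
proof (intro equalityI subsetI)
  fix m :: nat
  assume "m \<in> {1..}"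
  moreover have "m \<le> y m"
    using strict_mono_imp_increasing[OF \<open>strict_mono y\<close>] .
  ultimately obtain i where i: "y i < m" "m \<le> y (Suc i)"
    using exists_crossing[of y m m] \<open>y 0 = 0\<close> by auto
  then have "m - y i \<in> {1..n}" and "m = y i + (m - y i)"
    using gaps[of i] by auto
  then show "m \<in> (\<Union>q\<in>{1..n}. range (\<lambda>i. y i + q))"
    by blast
qed auto

lemma stmt3_imp_stmt2: "stmt3 \<Longrightarrow> stmt2"
  unfolding stmt2_def
proof (intro allI impI)
  fix n :: nat and x :: "nat \<Rightarrow> nat"
  assume "stmt3" "n > 1" and x: "\<forall>i\<ge>1. 0 < x i \<and> x i < x (i+1) \<and> x (i+1) - x i \<le> n"
  have mono: "strict_mono (\<lambda>i. x (Suc i))"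
    unfolding strict_mono_Suc_iff using x by simp
  then have x1: "x 1 \<le> x (Suc i)" for i
    using strict_mono_less_eq[OF mono, of 0 i] by simp
  define y where "y i = x (Suc i) - x 1" for i
  have "strict_mono y"
    using mono x1 unfolding strict_mono_def y_def by (simp add: diff_less_mono)
  moreover have "y 0 = 0"
    unfolding y_def by simp
  moreover have "y (Suc i) \<le> y i + n" for i
  proof -
    have "x (Suc (Suc i)) - x (Suc i) \<le> n"
      using x by simp
    then show ?thesis
      using x1[of i] unfolding y_def by linarith
  qed
  ultimately have "(\<Union>q\<in>{1..n}. range (\<lambda>i. y i + q)) = {1..}"
    using translates_cover by blast
  then obtain q where "has_index_ap (range (\<lambda>i. y i + q))"
    using \<open>stmt3\<close> \<open>n > 1\<close> unfolding stmt3_def by blast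
  moreover have "strict_mono (\<lambda>i. y i + q)"
    using \<open>strict_mono y\<close> by (simp add: strict_mono_def)
  ultimately obtain i j k where "i < j" "j < k" "y i + q + (y k + q) = 2 * (y j + q)" "i + k = 2 * j"
    using has_index_ap_range_iff by blast
  then have "x (Suc i) + x (Suc k) = 2 * x (Suc j)" "Suc i + Suc k = 2 * Suc j"
    using x1[of i] x1[of j] x1[of k] unfolding y_def by simp_all
  then show "\<exists>i j k. 1 \<le> i \<and> i < j \<and> j < k \<and> x i + x k = 2 * x j \<and> i + k = 2 * j"
    using \<open>i < j\<close> \<open>j < k\<close>
    by (intro exI[of _ "Suc i"] exI[of _ "Suc j"] exI[of _ "Suc k"]) simp
qed

definition next_in :: "nat set \<Rightarrow> nat \<Rightarrow> nat" where
  "next_in B v = (LEAST y. y \<in> B \<and> v < y)"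

lemma next_in:
  assumes "y \<in> B" "v < y"
  shows "next_in B v \<in> B" "v < next_in B v" "next_in B v \<le> y"
  using LeastI[of "\<lambda>y. y \<in> B \<and> v < y" y] Least_le[of "\<lambda>y. y \<in> B \<and> v < y" y] assms
  unfolding next_in_def by auto

lemma rank_next_in:
  assumes "v \<in> B" "y \<in> B" "v < y"
  shows "rank B (next_in B v) = Suc (rank B v)"
proof -
  have "z \<le> v" if "z \<in> B" "z < next_in B v" for z
    using that not_less_Least[of z "\<lambda>y. y \<in> B \<and> v < y"] unfolding next_in_def by auto
  then have "{z \<in> B. z < next_in B v} = insert v {z \<in> B. z < v}"
    using next_in[OF assms(2,3)] assms(1) by force
  then show ?thesis
    unfolding rank_def by simp
qed

lemma enumerate_through_windows:
  fixes B :: "nat set"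
  assumes windows: "\<And>c. v < c \<Longrightarrow> c + d \<le> Suc v + S * d \<Longrightarrow> \<exists>y\<in>B. c \<le> y \<and> y < c + d"
  obtains x where
    "\<And>i. 1 \<le> i \<Longrightarrow> i \<le> S \<Longrightarrow> x i \<in> B \<and> v < x i \<and> rank B (x i) = rank B (x 1) + (i - 1)"
    "\<And>i. i < S \<Longrightarrow> x i < x (Suc i) \<and> x (Suc i) \<le> x i + d"
proof -
  define x where "x i = (next_in B ^^ i) v" for i
  have x_Suc: "x (Suc i) = next_in B (x i)" for i
    unfolding x_def by simp
  have advance: "x (Suc i) \<in> B \<and> x i < x (Suc i) \<and> x (Suc i) \<le> x i + d \<and>
      (x i \<in> B \<longrightarrow> rank B (x (Suc i)) = Suc (rank B (x i)))"
    if i: "i < S" "v \<le> x i" "x i \<le> v + i * d" for i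
  proof -
    have "Suc (x i) + d \<le> Suc v + S * d"
      using i mult_le_mono1[of "Suc i" S d] by simp
    then obtain y where "y \<in> B" "x i < y" "y \<le> x i + d"
      using windows[of "Suc (x i)"] i by auto
    then show ?thesis
      unfolding x_Suc using next_in[of y B "x i"] rank_next_in[of "x i" B y] by auto
  qed
  have bounds: "v \<le> x i \<and> x i \<le> v + i * d" if "i \<le> S" for i
    using that
  proof (induction i)
    case (Suc i)
    then have "i < S" "v \<le> x i" "x i \<le> v + i * d"
      by auto
    then show ?case
      using advance[of i] by simp
  qed (simp add: x_def)
  have gaps: "x i < x (Suc i) \<and> x (Suc i) \<le> x i + d" if "i < S" for i
    using advance[of i] bounds[of i] that by simp
  have in_B: "x i \<in> B \<and> v < x i" if i: "1 \<le> i" "i \<le> S" for i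
  proof -
    obtain j where "i = Suc j" "j < S"
      using i by (cases i) auto
    then show ?thesis
      using advance[of j] bounds[of j] by simp
  qed
  have rank: "rank B (x i) = rank B (x 1) + (i - 1)" if "1 \<le> i" "i \<le> S" for i
    using that
  proof (induction i rule: dec_induct)
    case (step i)
    then have "rank B (x (Suc i)) = Suc (rank B (x i))"
      using advance[of i] bounds[of i] in_B[of i] by simp
    with step show ?case
      by simp
  qed simp
  show thesis
    by (rule that[of x]) (use in_B rank gaps in blast)+
qed

lemma rank_less_imp_less: "rank B u < rank B v \<Longrightarrow> u < v"
proof (rule ccontr)
  assume "\<not> u < v"
  then have "rank B v \<le> rank B u"
    unfolding rank_def by (intro card_mono) auto
  then show "rank B u < rank B v \<Longrightarrow> False"
    by simp
qed

lemma has_index_ap_if_meets_windows: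
  fixes B :: "nat set"
  assumes windows: "\<And>c. v < c \<Longrightarrow> c + d \<le> Suc v + S * d \<Longrightarrow> \<exists>y\<in>B. c \<le> y \<and> y < c + d"
    and S: "\<And>x. (\<And>i. 1 \<le> i \<Longrightarrow> i \<le> S \<Longrightarrow> 0 < x i) \<Longrightarrow>
      (\<And>i. 1 \<le> i \<Longrightarrow> i < S \<Longrightarrow> x i < x (Suc i) \<and> x (Suc i) \<le> x i + d) \<Longrightarrow>
      has_index_ap_upto S x"
  shows "has_index_ap B"
proof -
  obtain x where x: "\<And>i. 1 \<le> i \<Longrightarrow> i \<le> S \<Longrightarrow>
      x i \<in> B \<and> v < x i \<and> rank B (x i) = rank B (x 1) + (i - 1)"
    and gaps: "\<And>i. i < S \<Longrightarrow> x i < x (Suc i) \<and> x (Suc i) \<le> x i + d"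
    using enumerate_through_windows[of v d S B] windows by auto
  have "has_index_ap_upto S x"
  proof (rule S)
    show "0 < x i" if "1 \<le> i" "i \<le> S" for i
      using x[OF that] by simp
    show "x i < x (Suc i) \<and> x (Suc i) \<le> x i + d" if "i < S" for i
      using gaps[OF that] .
  qed
  then obtain i j k where ijk: "1 \<le> i" "i < j" "j < k" "k \<le> S" "x i + x k = 2 * x j" "i + k = 2 * j"
    unfolding has_index_ap_upto_def by blast
  then have rank: "rank B (x i) < rank B (x j)" "rank B (x j) < rank B (x k)"
    "rank B (x i) + rank B (x k) = 2 * rank B (x j)"
    using x[of i] x[of j] x[of k] by auto
  then have "x i < x j" "x j < x k"
    by (blast intro: rank_less_imp_less)+
  moreover have "x i \<in> B" "x j \<in> B" "x k \<in> B"
    using x[of i] x[of j] x[of k] ijk by simp_all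
  ultimately show ?thesis
    unfolding has_index_ap_def using ijk(5) rank(3) by blast
qed

lemma cover_has_index_ap_step:
  fixes A :: "'i \<Rightarrow> nat set"
  assumes smaller: "\<And>c Q'. a \<le> c \<Longrightarrow> finite Q' \<Longrightarrow> card Q' \<le> t \<Longrightarrow>
      {c..<c+d} \<subseteq> (\<Union>q\<in>Q'. A q) \<Longrightarrow> \<exists>q\<in>Q'. has_index_ap (A q)"
    and S: "\<And>x. (\<And>i. 1 \<le> i \<Longrightarrow> i \<le> S \<Longrightarrow> 0 < x i) \<Longrightarrow>
      (\<And>i. 1 \<le> i \<Longrightarrow> i < S \<Longrightarrow> x i < x (Suc i) \<and> x (Suc i) \<le> x i + d) \<Longrightarrow>
      has_index_ap_upto S x"
    and a: "1 \<le> a" and Q: "finite Q" "card Q \<le> Suc t"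
    and cover: "{a..<a + (S * d + 1)} \<subseteq> (\<Union>q\<in>Q. A q)"
  shows "\<exists>q\<in>Q. has_index_ap (A q)"
proof -
  have "a \<in> {a..<a + (S * d + 1)}"
    by simp
  then obtain q0 where "q0 \<in> Q"
    using cover by blast
  show ?thesis
  proof (cases "\<exists>c. a \<le> c \<and> c + d \<le> a + S * d \<and> (\<forall>y\<in>A q0. y < c \<or> c + d \<le> y)")
    case True
    then obtain c where c: "a \<le> c" "c + d \<le> a + S * d" "\<forall>y\<in>A q0. y < c \<or> c + d \<le> y"
      by blast
    then have "{c..<c+d} \<subseteq> {a..<a + (S * d + 1)} - A q0"
      by force
    then have "{c..<c+d} \<subseteq> (\<Union>q\<in>Q - {q0}. A q)"
      using cover by blast
    moreover have "finite (Q - {q0})" "card (Q - {q0}) \<le> t"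
      using Q \<open>q0 \<in> Q\<close> by simp_all
    ultimately have "\<exists>q\<in>Q - {q0}. has_index_ap (A q)"
      using smaller c(1) by blast
    then show ?thesis
      by blast
  next
    case False
    have "\<exists>y\<in>A q0. c \<le> y \<and> y < c + d"
      if "a - 1 < c" "c + d \<le> Suc (a - 1) + S * d" for c
    proof -
      have "a \<le> c" "c + d \<le> a + S * d"
        using a that by simp_all
      then obtain y where "y \<in> A q0" "\<not> y < c" "\<not> c + d \<le> y"
        using False by blast
      then show ?thesis
        by (intro bexI[of _ y]) simp_all
    qed
    then have "has_index_ap (A q0)"
      using S by (rule has_index_ap_if_meets_windows)
    with \<open>q0 \<in> Q\<close> show ?thesis
      by blast
  qed
qed

lemma long_interval_cover_has_index_ap:
  assumes "stmt2a"
  shows "\<exists>T. \<forall>a\<ge>1. \<forall>(A :: 'i \<Rightarrow> nat set) Q. finite Q \<and> card Q \<le> t \<and> {a..<a+T} \<subseteq> (\<Union>q\<in>Q. A q)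
           \<longrightarrow> (\<exists>q\<in>Q. has_index_ap (A q))"
proof (induction t)
  case 0
  show ?case
  proof (intro exI[of _ 1] allI impI, elim conjE)
    fix a and A :: "'i \<Rightarrow> nat set" and Q
    assume "finite Q" "card Q \<le> 0" and cover: "{a..<a+1} \<subseteq> (\<Union>q\<in>Q. A q)"
    have "a \<in> (\<Union>q\<in>Q. A q)"
      using cover by (rule subsetD) simp
    moreover have "Q = {}"
      using \<open>finite Q\<close> \<open>card Q \<le> 0\<close> by simp
    ultimately show "\<exists>q\<in>Q. has_index_ap (A q)"
      by simp
  qed
next
  case (Suc t)
  then obtain T where T: "\<forall>a\<ge>1. \<forall>(A :: 'i \<Rightarrow> nat set) Q. finite Q \<and> card Q \<le> t \<and>
      {a..<a+T} \<subseteq> (\<Union>q\<in>Q. A q) \<longrightarrow> (\<exists>q\<in>Q. has_index_ap (A q))"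
    by (elim exE)
  \<comment> \<open>(2a) needs a gap bound d > 1, and d \<ge> T lets the induction hypothesis handle a window of
    length d that one of the sets avoids.\<close>
  define d where "d = T + 2"
  have "d > 1"
    unfolding d_def by simp
  obtain S where S: "\<And>x. (\<And>i. 1 \<le> i \<Longrightarrow> i \<le> S \<Longrightarrow> 0 < x i) \<Longrightarrow>
      (\<And>i. 1 \<le> i \<Longrightarrow> i < S \<Longrightarrow> x i < x (Suc i) \<and> x (Suc i) \<le> x i + d) \<Longrightarrow>
      has_index_ap_upto S x"
    using stmt2aD[OF \<open>stmt2a\<close> \<open>d > 1\<close>] by blast
  have "\<exists>q\<in>Q. has_index_ap (A q)"
    if "1 \<le> a" "finite Q" "card Q \<le> Suc t" "{a..<a + (S * d + 1)} \<subseteq> (\<Union>q\<in>Q. A q)"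
    for a and A :: "'i \<Rightarrow> nat set" and Q
  proof (rule cover_has_index_ap_step[OF _ S that])
    fix c Q'
    assume "a \<le> c" "finite Q'" "card Q' \<le> t" and "{c..<c+d} \<subseteq> (\<Union>q\<in>Q'. A q)"
    moreover have "{c..<c+T} \<subseteq> {c..<c+d}"
      unfolding d_def by auto
    ultimately show "\<exists>q\<in>Q'. has_index_ap (A q)"
      using T \<open>1 \<le> a\<close> by (meson order_trans)
  qed
  then show ?case
    by blast
qed

lemma has_index_ap_Int_lessThan:
  assumes "has_index_ap (A \<inter> {..<N})"
  shows "has_index_ap A"
proof -
  obtain a b c where abc: "a \<in> A" "b \<in> A" "c \<in> A" "a < b" "b < c" "c < N" "a + c = 2 * b"
    and "rank (A \<inter> {..<N}) a + rank (A \<inter> {..<N}) c = 2 * rank (A \<inter> {..<N}) b"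
    using assms unfolding has_index_ap_def by auto
  moreover have "rank (A \<inter> {..<N}) v = rank A v" if "v < N" for v
    unfolding rank_def using that by (intro arg_cong[where f = card]) auto
  ultimately have "rank A a + rank A c = 2 * rank A b"
    by simp
  with abc show ?thesis
    unfolding has_index_ap_def by blast
qed

lemma stmt2a_imp_stmt3a: "stmt2a \<Longrightarrow> stmt3a"
  unfolding stmt3a_def
proof (intro allI impI)
  fix t :: nat
  assume "stmt2a"
  obtain T where T: "\<forall>a\<ge>1. \<forall>(A :: nat \<Rightarrow> nat set) Q. finite Q \<and> card Q \<le> t \<and>
      {a..<a+T} \<subseteq> (\<Union>q\<in>Q. A q) \<longrightarrow> (\<exists>q\<in>Q. has_index_ap (A q))"
    using long_interval_cover_has_index_ap[OF \<open>stmt2a\<close>, of t] by (elim exE)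
  show "\<exists>T. \<forall>a\<ge>1. \<forall>A. (\<Union>q\<in>{1..t}. A q) = {a..<a+T} \<longrightarrow> (\<exists>q\<in>{1..t}. has_index_ap (A q))"
  proof (intro exI[of _ T] allI impI)
    fix a :: nat and A :: "nat \<Rightarrow> nat set"
    assume "1 \<le> a" "(\<Union>q\<in>{1..t}. A q) = {a..<a+T}"
    then show "\<exists>q\<in>{1..t}. has_index_ap (A q)"
      using T[rule_format, of a "{1..t}" A] by simp
  qed
qed

lemma stmt2a_imp_stmt3: "stmt2a \<Longrightarrow> stmt3"
  unfolding stmt3_def
proof (intro allI impI)
  fix t :: nat and A :: "nat \<Rightarrow> nat set"
  assume "stmt2a" and cover: "(\<Union>q\<in>{1..t}. A q) = {1..}"
  obtain T where T: "\<forall>a\<ge>1. \<forall>(A :: nat \<Rightarrow> nat set) Q. finite Q \<and> card Q \<le> t \<and>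
      {a..<a+T} \<subseteq> (\<Union>q\<in>Q. A q) \<longrightarrow> (\<exists>q\<in>Q. has_index_ap (A q))"
    using long_interval_cover_has_index_ap[OF \<open>stmt2a\<close>, of t] by (elim exE)
  have "{1..<1+T} \<subseteq> (\<Union>q\<in>{1..t}. A q)"
    unfolding cover by auto
  then show "\<exists>q\<in>{1..t}. has_index_ap (A q)"
    using T[rule_format, of 1 "{1..t}" A] by simp
qed

lemma stmt3a_imp_stmt3: "stmt3a \<Longrightarrow> stmt3"
  unfolding stmt3_def
proof (intro allI impI)
  fix t :: nat and A :: "nat \<Rightarrow> nat set"
  assume "stmt3a" "t > 1" and cover: "(\<Union>q\<in>{1..t}. A q) = {1..}"
  obtain T where T: "\<forall>a\<ge>1. \<forall>A. (\<Union>q\<in>{1..t}. A q) = {a..<a+T} \<longrightarrow> (\<exists>q\<in>{1..t}. has_index_ap (A q))"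
    using \<open>stmt3a\<close>[unfolded stmt3a_def, rule_format, OF \<open>t > 1\<close>] by (elim exE)
  have "(\<Union>q\<in>{1..t}. A q \<inter> {..<1+T}) = {1..<1+T}"
    using cover by auto
  then obtain q where "q \<in> {1..t}" "has_index_ap (A q \<inter> {..<1+T})"
    using T[rule_format, of 1 "\<lambda>q. A q \<inter> {..<1+T}"] by auto
  then show "\<exists>q\<in>{1..t}. has_index_ap (A q)"
    using has_index_ap_Int_lessThan by blast
qed

theorem theorem4:
  shows "(stmt1 \<longleftrightarrow> stmt1a) \<and> (stmt1a \<longleftrightarrow> stmt2) \<and> (stmt2 \<longleftrightarrow> stmt2a)
       \<and> (stmt2a \<longleftrightarrow> stmt3) \<and> (stmt3 \<longleftrightarrow> stmt3a)"
  using stmt1_imp_stmt1a stmt1a_imp_stmt2a stmt2a_imp_stmt3 stmt3_imp_stmt2 stmt2_imp_stmt1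
    stmt2a_imp_stmt3a stmt3a_imp_stmt3
  by blast

end
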